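(* For every $M\ge0$, $\dim_{\mathbb C}I'_{(M)}\le|B^{(k,r)}_M|$, and consequently $\dim_{\mathbb K}\big(I^{(k,r)}\cap V_{(M)}\big)\le|B^{(k,r)}_M|$.
   Context: Fix integers $n\ge2$, $1\le k\le n-1$, $r\ge2$, $g=\gcd(k+1,r-1)$, $\tau=e^{2\pi\sqrt{-1}/(r-1)}$; specialization $(\ast)$: $t=u^{(r-1)/g}$, $q=\tau u^{-(k+1)/g}$; $\mathbb K$ is the field of specialized scalars (rational functions in a root of $u$), $V=\mathbb K[x_1^{\pm1},\dots,x_n^{\pm1}]$. For a Laurent polynomial $f=\sum c_\lambda x^\lambda$, $\deg f=\max\{|\lambda_i|:c_\lambda\ne0\}$; $V_{(M)}=\{f\in V:\deg f\le M\}$. $Z^{(k,r)}$ is the set of $z\in\mathbb K^n$ for which there exist distinct $i_1,\dots,i_{k+1}$ and $s_1,\dots,s_k\in\mathbb Z_{\ge0}$ with $z_{i_{a+1}}=z_{i_a}tq^{s_a}$ ($1\le a\le k$), $\sum_as_a\le r-2$, and $i_a<i_{a+1}$ whenever $s_a=0$; $I^{(k,r)}=\{f\in V:f(z)=0\ \forall z\in Z^{(k,r)}\}$. The $u=1$ limit: $I'$ is the set of $f\in\mathbb C[x_1^{\pm1},\dots,x_n^{\pm1}]$ vanishing at every $z\in\mathbb C^n$ for which there are $j_1<\dots<j_{k+1}$, $w\in\mathbb C$ and $p_a\in\{0,\dots,r-2\}$ with $z_{j_a}=\tau^{p_a}w$ ($1\le a\le k+1$); $I'_{(M)}=\{f\in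 I':\deg f\le M\}$. $P=\mathbb Z^n$, $P_M=\{\lambda:-M\le\lambda_i\le M\}$. $\rho(\lambda)$ is the unique permutation of $(\frac{n-1}2,\dots,-\frac{n-1}2)$ with $\rho(\lambda)_i>\rho(\lambda)_j$ iff $\lambda_i>\lambda_j$ or ($\lambda_i=\lambda_j$, $i<j$). $(i,j)$ is a neighborhood of type $(a,b)$ in $\lambda$ if $\rho(\lambda)_i-\rho(\lambda)_j=a-1$ and either $\lambda_i-\lambda_j\le b-1$, or $\lambda_i-\lambda_j=b$ and $j<i$. $B^{(k,r)}$: the $\lambda$ with no neighborhood of type $(k+1,r-1)$; $B^{(k,r)}_M=B^{(k,r)}\cap P_M$. *)

theory Defs
  imports Complex_Main "HOL-Library.Function_Algebras"
    "HOL-Computational_Algebra.Polynomial" "HOL-Computational_Algebra.Fraction_Field"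
begin

(* Laurent polynomials in x_0..x_{n-1} (paper: x_1..x_n) over a field 'a are represented by
   their coefficient functions  f :: (nat => int) => 'a  (exponent vector lam, lam i = 0 for i >= n),
   with finite support. *)

definition Pn :: "nat \<Rightarrow> (nat \<Rightarrow> int) set" where
  "Pn n = {lam. \<forall>i\<ge>n. lam i = 0}"

definition PM :: "nat \<Rightarrow> nat \<Rightarrow> (nat \<Rightarrow> int) set" where
  "PM n M = {lam. lam \<in> Pn n \<and> (\<forall>i<n. - int M \<le> lam i \<and> lam i \<le> int M)}"

definition LV :: "nat \<Rightarrow> ((nat \<Rightarrow> int) \<Rightarrow> 'a::zero) set" where
  "LV n = {f. finite {lam. f lam \<noteq> 0} \<and> (\<forall>lam. f lam \<noteq> 0 \<longrightarrow> lam \<in> Pn n)}"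

definition VM :: "nat \<Rightarrow> nat \<Rightarrow> ((nat \<Rightarrow> int) \<Rightarrow> 'a::zero) set" where
  "VM n M = {f. f \<in> LV n \<and> (\<forall>lam. f lam \<noteq> 0 \<longrightarrow> lam \<in> PM n M)}"

definition lpeval :: "nat \<Rightarrow> ((nat \<Rightarrow> int) \<Rightarrow> 'a::field) \<Rightarrow> (nat \<Rightarrow> 'a) \<Rightarrow> 'a" where
  "lpeval n f z = (\<Sum>lam \<in> {lam. f lam \<noteq> 0}. f lam * (\<Prod>i<n. z i powi lam i))"

definition fdim :: "((nat \<Rightarrow> int) \<Rightarrow> 'a::field) set \<Rightarrow> nat" where
  "fdim S = vector_space.dim (\<lambda>c f. \<lambda>x. c * f x) S"

definition tau :: "nat \<Rightarrow> complex" where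
  "tau r = cis (2 * pi / real (r - 1))"

(* The field K: rational functions C(v) in an indeterminate v, where u = v^N
   (v a root of u).  *)
type_synonym K = "complex poly fract"

definition uK :: "nat \<Rightarrow> K" where
  "uK N = Fract (monom 1 N) 1"

definition tK :: "nat \<Rightarrow> nat \<Rightarrow> nat \<Rightarrow> K" where
  "tK N k r = uK N ^ ((r - 1) div gcd (k + 1) (r - 1))"

definition qK :: "nat \<Rightarrow> nat \<Rightarrow> nat \<Rightarrow> K" where
  "qK N k r = Fract [:tau r:] 1 * inverse (uK N ^ ((k + 1) div gcd (k + 1) (r - 1)))"

(* Z^(k,r); points with all coordinates nonzero (Laurent polynomials are evaluated on the torus) *)
definition Zkr :: "nat \<Rightarrow> nat \<Rightarrow> nat \<Rightarrow> 'a::field \<Rightarrow> 'a \<Rightarrow> (nat \<Rightarrow> 'a) set" where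
  "Zkr n k r t q = {z. (\<forall>i<n. z i \<noteq> 0) \<and>
     (\<exists>is s. length is = k + 1 \<and> distinct is \<and> set is \<subseteq> {..<n} \<and> length s = k \<and>
        sum_list s \<le> r - 2 \<and>
        (\<forall>a<k. z (is ! (a + 1)) = z (is ! a) * t * q ^ (s ! a) \<and>
               (s ! a = 0 \<longrightarrow> is ! a < is ! (a + 1))))}"

definition Ikr :: "nat \<Rightarrow> nat \<Rightarrow> nat \<Rightarrow> nat \<Rightarrow> ((nat \<Rightarrow> int) \<Rightarrow> K) set" where
  "Ikr N n k r = {f \<in> LV n. \<forall>z \<in> Zkr n k r (tK N k r) (qK N k r). lpeval n f z = 0}"

(* the u = 1 limit *)
definition Zprime :: "nat \<Rightarrow> nat \<Rightarrow> nat \<Rightarrow> (nat \<Rightarrow> complex) set" where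
  "Zprime n k r = {z. (\<forall>i<n. z i \<noteq> 0) \<and>
     (\<exists>js w p. length js = k + 1 \<and> sorted_wrt (<) js \<and> set js \<subseteq> {..<n} \<and>
        length p = k + 1 \<and>
        (\<forall>a<k + 1. p ! a \<le> r - 2 \<and> z (js ! a) = tau r ^ (p ! a) * w))}"

definition Iprime :: "nat \<Rightarrow> nat \<Rightarrow> nat \<Rightarrow> ((nat \<Rightarrow> int) \<Rightarrow> complex) set" where
  "Iprime n k r = {f \<in> LV n. \<forall>z \<in> Zprime n k r. lpeval n f z = 0}"

definition rk :: "nat \<Rightarrow> (nat \<Rightarrow> int) \<Rightarrow> nat \<Rightarrow> nat" where
  "rk n lam i = card {j. j < n \<and> (lam j > lam i \<or> (lam j = lam i \<and> j < i))}"

definition rho :: "nat \<Rightarrow> (nat \<Rightarrow> int) \<Rightarrow> nat \<Rightarrow> rat" where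
  "rho n lam i = of_nat (n - 1) / 2 - of_nat (rk n lam i)"

definition nbhd :: "nat \<Rightarrow> (nat \<Rightarrow> int) \<Rightarrow> nat \<Rightarrow> nat \<Rightarrow> int \<Rightarrow> int \<Rightarrow> bool" where
  "nbhd n lam i j a b \<longleftrightarrow> i < n \<and> j < n \<and> rho n lam i - rho n lam j = of_int (a - 1) \<and>
     (lam i - lam j \<le> b - 1 \<or> (lam i - lam j = b \<and> j < i))"

definition Bkr :: "nat \<Rightarrow> nat \<Rightarrow> nat \<Rightarrow> (nat \<Rightarrow> int) set" where
  "Bkr n k r = {lam \<in> Pn n. \<not> (\<exists>i j. nbhd n lam i j (int k + 1) (int r - 1))}"

definition BkrM :: "nat \<Rightarrow> nat \<Rightarrow> nat \<Rightarrow> nat \<Rightarrow> (nat \<Rightarrow> int) set" where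
  "BkrM n k r M = Bkr n k r \<inter> PM n M"

end

(*
  If f lies in either ideal, has degree at most M and vanishes on B_M, then f = 0; hence
  restricting coefficient functions to B_M is injective on the ideal.

  For I', suppose f <> 0 and pick lam in its support with sum_i lam_i^2 maximal and, among
  those, sum_i i * lam_i minimal. If lam is not in B, a neighbourhood (i, j) yields k + 1 indices I
  whose exponents lie in the window [lam_j, lam_j + r - 1]. Evaluating f at the points of Z' with
  z_l = tau^(p_l) * y_j for l in I and averaging over p against the characters tau^(-p . lam)
  shows that the coefficients of f over a fibre (same exponents off I, same total on I, congruent
  modulo r - 1 on I) sum to zero. Any other exponent vector in the fibre of lam has a larger sum of
  squares, or the same one and a smaller sum_i i * lam_i, so f(lam) = 0.

  For I^(k,r), where u = v^N: clear the denominators and the highest common power of v - 1 from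
  the coefficients of f and put v = 1. Every point of Z' lifts to a point of Z^(k,r) whose
  coordinates are monomials in v, so this specialisation is a nonzero element of I' vanishing on B.
*)

theory Submission
  imports Defs "HOL-Library.FuncSet" "HOL-Library.Product_Lexorder" "HOL-Library.Real_Mod"
begin

section \<open>Dimension bound\<close>

lemma vector_space_fun: "vector_space ((\<lambda>c f x. c * f x) :: 'a::field \<Rightarrow> ('b \<Rightarrow> 'a) \<Rightarrow> 'b \<Rightarrow> 'a)"
  by unfold_locales (auto simp: fun_eq_iff algebra_simps)

lemma sum_fun_apply: "finite A \<Longrightarrow> (\<Sum>l\<in>A. g l) x = (\<Sum>l\<in>A. g l x)"
  for g :: "'c \<Rightarrow> 'b \<Rightarrow> 'a::comm_monoid_add"
  by (induction A rule: finite_induct) auto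

lemma fdim_le_card_if_determined_on:
  fixes S :: "((nat \<Rightarrow> int) \<Rightarrow> 'a::field) set" and B :: "(nat \<Rightarrow> int) set"
  assumes S: "module.subspace (\<lambda>c f x. c * f x) S" and "finite B"
    and determined: "\<And>f. f \<in> S \<Longrightarrow> \<forall>l\<in>B. f l = 0 \<Longrightarrow> f = 0"
  shows "fdim S \<le> card B"
proof -
  let ?s = "(\<lambda>c f x. c * f x) :: 'a \<Rightarrow> ((nat \<Rightarrow> int) \<Rightarrow> 'a) \<Rightarrow> (nat \<Rightarrow> int) \<Rightarrow> 'a"
  interpret V: vector_space ?s by (rule vector_space_fun)
  interpret VP: vector_space_pair ?s ?s by unfold_locales
  obtain B0 where B0: "B0 \<subseteq> S" "V.independent B0" "S \<subseteq> V.span B0" "card B0 = V.dim S"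
    using V.basis_exists by blast
  have span_B0: "V.span B0 = S"
    using B0 S V.span_minimal V.span_subspace by blast
  define restrict where "restrict f l = (if l \<in> B then f l else 0)"
    for f :: "(nat \<Rightarrow> int) \<Rightarrow> 'a" and l
  define delta :: "(nat \<Rightarrow> int) \<Rightarrow> (nat \<Rightarrow> int) \<Rightarrow> 'a"
    where "delta l m = (if m = l then 1 else 0)" for l m
  have linear: "Vector_Spaces.linear ?s ?s restrict"
    unfolding Vector_Spaces.linear_iff restrict_def using vector_space_fun
    by (auto simp: fun_eq_iff)
  have "inj_on restrict S"
  proof (rule inj_onI)
    fix f g assume "f \<in> S" "g \<in> S" "restrict f = restrict g"
    then have "f - g \<in> S" "\<forall>l\<in>B. (f - g) l = 0"
      using V.subspace_diff[OF S] by (auto simp: restrict_def fun_eq_iff split: if_splits)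
    then have "f - g = 0" by (rule determined)
    then show "f = g" by simp
  qed
  then have inj: "inj_on restrict (V.span B0)" by (simp add: span_B0)
  have restrict_eq: "restrict f = (\<Sum>l\<in>B. ?s (f l) (delta l))" for f
    using \<open>finite B\<close>
    by (intro ext) (simp add: restrict_def delta_def sum_fun_apply if_distrib cong: if_cong)
  have "restrict f \<in> V.span (delta ` B)" for f
    unfolding restrict_eq by (intro V.span_sum V.span_scale V.span_base) auto
  then have "restrict ` B0 \<subseteq> V.span (delta ` B)" by blast
  then have "card (restrict ` B0) \<le> card (delta ` B)"
    using V.independent_span_bound[OF finite_imageI[OF \<open>finite B\<close>]]
      VP.linear_independent_injective_image[OF linear B0(2) inj] by blast
  also have "\<dots> \<le> card B" using \<open>finite B\<close> card_image_le by blast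
  also have "card (restrict ` B0) = card B0"
    using inj V.span_superset by (intro card_image) (meson inj_on_subset)
  finally show ?thesis using B0(4) unfolding fdim_def by simp
qed

section \<open>Laurent polynomials\<close>

lemma LV_finite_support: "f \<in> LV n \<Longrightarrow> finite {x. f x \<noteq> 0}"
  unfolding LV_def by auto

lemma lpeval_eq_sum:
  assumes "finite A" "{x. f x \<noteq> 0} \<subseteq> A"
  shows "lpeval n f z = (\<Sum>x\<in>A. f x * (\<Prod>i<n. z i powi x i))"
  unfolding lpeval_def using assms by (intro sum.mono_neutral_left) auto

lemma lpeval_add:
  assumes "f \<in> LV n" "g \<in> LV n"
  shows "lpeval n (f + g) z = lpeval n f z + lpeval n g z"
proof -
  define A where "A = {x. f x \<noteq> 0} \<union> {x. g x \<noteq> 0}"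
  have "finite A" using assms LV_finite_support A_def by auto
  have "lpeval n (f + g) z = (\<Sum>x\<in>A. (f + g) x * (\<Prod>i<n. z i powi x i))"
    by (rule lpeval_eq_sum[OF \<open>finite A\<close>]) (auto simp: A_def)
  also have "\<dots> = lpeval n f z + lpeval n g z"
    by (simp add: lpeval_eq_sum[OF \<open>finite A\<close>] A_def sum.distrib algebra_simps)
  finally show ?thesis .
qed

lemma lpeval_scale:
  assumes "f \<in> LV n"
  shows "lpeval n (\<lambda>x. c * f x) z = c * lpeval n f z"
proof -
  define A where "A = {x. f x \<noteq> 0}"
  have "finite A" using assms LV_finite_support A_def by auto
  have "lpeval n (\<lambda>x. c * f x) z = (\<Sum>x\<in>A. c * f x * (\<Prod>i<n. z i powi x i))"
    by (rule lpeval_eq_sum[OF \<open>finite A\<close>]) (auto simp: A_def)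
  also have "\<dots> = c * lpeval n f z"
    by (simp add: lpeval_eq_sum[OF \<open>finite A\<close>] A_def sum_distrib_left algebra_simps)
  finally show ?thesis .
qed

lemma subspace_vanishing_VM:
  fixes Z :: "(nat \<Rightarrow> 'a::field) set"
  shows "module.subspace (\<lambda>c f x. c * f x) ({f \<in> LV n. \<forall>z\<in>Z. lpeval n f z = 0} \<inter> VM n M)"
proof -
  interpret V: vector_space "\<lambda>c (f :: (nat \<Rightarrow> int) \<Rightarrow> 'a) x. c * f x" by (rule vector_space_fun)
  have VM_LV: "VM n M \<subseteq> LV n" by (auto simp: VM_def)
  have "f + g \<in> VM n M" if "f \<in> VM n M" "g \<in> VM n M" for f g :: "(nat \<Rightarrow> int) \<Rightarrow> 'a"
  proof -
    have "{x. (f + g) x \<noteq> 0} \<subseteq> {x. f x \<noteq> 0} \<union> {x. g x \<noteq> 0}" by auto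
    then show ?thesis
      using that unfolding VM_def LV_def by (auto dest: finite_subset)
  qed
  moreover have "(\<lambda>x. c * f x) \<in> VM n M" if "f \<in> VM n M" for c and f :: "(nat \<Rightarrow> int) \<Rightarrow> 'a"
  proof -
    have "{x. c * f x \<noteq> 0} \<subseteq> {x. f x \<noteq> 0}" by auto
    then show ?thesis
      using that unfolding VM_def LV_def by (auto dest: finite_subset)
  qed
  moreover have "lpeval n 0 z = 0" for z :: "nat \<Rightarrow> 'a"
    by (simp add: lpeval_def)
  moreover have "(0 :: (nat \<Rightarrow> int) \<Rightarrow> 'a) \<in> VM n M"
    by (simp add: VM_def LV_def)
  ultimately show ?thesis
    unfolding V.subspace_def using VM_LV by (auto simp: lpeval_add lpeval_scale)
qed

lemma finite_PM: "finite (PM n M)"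
proof -
  let ?L = "{xs. set xs \<subseteq> {- int M..int M} \<and> length xs = n}"
  have "PM n M \<subseteq> (\<lambda>xs i. if i < n then xs ! i else 0) ` ?L"
  proof
    fix lam assume lam: "lam \<in> PM n M"
    then have "lam = (\<lambda>i. if i < n then map lam [0..<n] ! i else 0)"
      unfolding PM_def Pn_def by (auto simp: fun_eq_iff)
    moreover have "map lam [0..<n] \<in> ?L" using lam unfolding PM_def by auto
    ultimately show "lam \<in> (\<lambda>xs i. if i < n then xs ! i else 0) ` ?L" by blast
  qed
  moreover have "finite ?L" by (rule finite_lists_length_eq) simp
  ultimately show ?thesis by (blast intro: finite_subset finite_imageI)
qed

lemma laurent_vanishing_imp_coeff_zero:
  fixes b :: "int \<Rightarrow> 'a::field_char_0"
  assumes "finite D" and vanishing: "\<And>t. t \<noteq> 0 \<Longrightarrow> (\<Sum>d\<in>D. b d * t powi d) = 0"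
    and "d \<in> D"
  shows "b d = 0"
proof -
  define d0 where "d0 = Min D"
  have d0_le: "d0 \<le> d'" if "d' \<in> D" for d' using \<open>finite D\<close> that d0_def by auto
  define p where "p = (\<Sum>d'\<in>D. monom (b d') (nat (d' - d0)))"
  have "poly p t = 0" if "t \<noteq> 0" for t
  proof -
    have "poly p t = (\<Sum>d'\<in>D. b d' * t powi (d' - d0))"
      using d0_le by (auto simp: p_def poly_sum poly_monom power_int_def intro!: sum.cong)
    also have "\<dots> = (\<Sum>d'\<in>D. b d' * t powi d') / t powi d0"
      using \<open>t \<noteq> 0\<close> by (simp add: power_int_diff sum_divide_distrib)
    finally show ?thesis using vanishing[OF \<open>t \<noteq> 0\<close>] by simp
  qed
  then have "UNIV - {0} \<subseteq> {t. poly p t = 0}" by auto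
  moreover have "infinite (UNIV - {0 :: 'a})"
    by (simp add: Diff_infinite_finite infinite_UNIV_char_0)
  ultimately have "p = 0" using poly_roots_finite finite_subset by blast
  have "coeff p (nat (d - d0)) = (\<Sum>d'\<in>D. if d' = d then b d' else 0)"
    unfolding p_def coeff_sum coeff_monom
    using d0_le \<open>d \<in> D\<close> by (intro sum.cong) (auto simp: nat_eq_iff)
  also have "\<dots> = b d" using \<open>finite D\<close> \<open>d \<in> D\<close> by simp
  finally show ?thesis using \<open>p = 0\<close> by simp
qed

lemma laurent_vanishing_fix_last_exponent:
  fixes c :: "'b \<Rightarrow> 'a::field_char_0" and e :: "'b \<Rightarrow> nat \<Rightarrow> int"
  assumes "finite A"
    and vanishing: "\<And>y. \<forall>l<Suc n. y l \<noteq> 0 \<Longrightarrow> (\<Sum>x\<in>A. c x * (\<Prod>l<Suc n. y l powi e x l)) = 0"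
    and y: "\<forall>l<n. y l \<noteq> 0"
  shows "(\<Sum>x | x \<in> A \<and> e x n = j. c x * (\<Prod>l<n. y l powi e x l)) = 0"
proof -
  define b where "b j = (\<Sum>x | x \<in> A \<and> e x n = j. c x * (\<Prod>l<n. y l powi e x l))" for j
  have "(\<Sum>j\<in>(\<lambda>x. e x n) ` A. b j * t powi j) = 0" if "t \<noteq> 0" for t
  proof -
    have "0 = (\<Sum>x\<in>A. c x * (\<Prod>l<Suc n. (y(n := t)) l powi e x l))"
      using vanishing[of "y(n := t)"] y \<open>t \<noteq> 0\<close> by simp
    also have "\<dots> = (\<Sum>x\<in>A. c x * (\<Prod>l<n. y l powi e x l) * t powi e x n)"
      by (intro sum.cong refl) (simp add: mult.assoc)
    also have "\<dots> = (\<Sum>j\<in>(\<lambda>x. e x n) ` A.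
                      \<Sum>x | x \<in> A \<and> e x n = j. c x * (\<Prod>l<n. y l powi e x l) * t powi e x n)"
      by (rule sum.image_gen[OF assms(1)])
    also have "\<dots> = (\<Sum>j\<in>(\<lambda>x. e x n) ` A. b j * t powi j)"
      unfolding b_def sum_distrib_right by (intro sum.cong refl) auto
    finally show ?thesis by simp
  qed
  then have "b j = 0" if "j \<in> (\<lambda>x. e x n) ` A"
    using laurent_vanishing_imp_coeff_zero[OF finite_imageI[OF assms(1)]] that by blast
  moreover have "b j = 0" if "j \<notin> (\<lambda>x. e x n) ` A"
    unfolding b_def using that by (intro sum.neutral) force
  ultimately show ?thesis unfolding b_def by blast
qed

lemma laurent_vanishing_imp_fibre_sum_zero:
  fixes c :: "'b \<Rightarrow> 'a::field_char_0" and e :: "'b \<Rightarrow> nat \<Rightarrow> int"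
  assumes "finite A"
    and "\<And>y. \<forall>l<n. y l \<noteq> 0 \<Longrightarrow> (\<Sum>x\<in>A. c x * (\<Prod>l<n. y l powi e x l)) = 0"
  shows "(\<Sum>x | x \<in> A \<and> (\<forall>l<n. e x l = d l). c x) = 0"
  using assms
proof (induction n arbitrary: A)
  case 0
  then show ?case by simp
next
  case (Suc n)
  define A' where "A' = {x \<in> A. e x n = d n}"
  have "finite A'" using Suc.prems(1) by (simp add: A'_def)
  moreover have "(\<Sum>x\<in>A'. c x * (\<Prod>l<n. y l powi e x l)) = 0" if "\<forall>l<n. y l \<noteq> 0" for y
    using laurent_vanishing_fix_last_exponent[OF Suc.prems that] by (simp add: A'_def)
  ultimately have "(\<Sum>x | x \<in> A' \<and> (\<forall>l<n. e x l = d l). c x) = 0"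
    by (rule Suc.IH)
  moreover have "{x. x \<in> A' \<and> (\<forall>l<n. e x l = d l)} = {x. x \<in> A \<and> (\<forall>l<Suc n. e x l = d l)}"
    unfolding A'_def using less_Suc_eq by auto
  ultimately show ?case by simp
qed

section \<open>Roots of unity\<close>

lemma tau_powi_eq_1_iff:
  assumes "r \<ge> 2"
  shows "tau r powi d = 1 \<longleftrightarrow> int (r - 1) dvd d"
proof -
  have "tau r powi d = cis (of_int d / real (r - 1) * (2 * pi))"
    by (simp add: tau_def cis_power_int)
  also have "\<dots> = 1 \<longleftrightarrow> (\<exists>j. of_int d / real (r - 1) = of_int j)"
    unfolding cis_eq_1_iff mult_cancel_right by simp
  also have "\<dots> \<longleftrightarrow> (\<exists>j. of_int d = of_int j * real (r - 1))"
    using assms by (simp add: divide_eq_eq)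
  also have "\<dots> \<longleftrightarrow> (\<exists>j. d = j * int (r - 1))"
  proof -
    have "real_of_int d = real_of_int j * real (r - 1) \<longleftrightarrow> d = j * int (r - 1)" for j
      using of_int_eq_iff[of d "j * int (r - 1)", where 'a = real] by simp
    then show ?thesis by simp
  qed
  finally show ?thesis by (auto simp: dvd_def mult.commute)
qed

lemma sum_tau_powi:
  assumes "r \<ge> 2"
  shows "(\<Sum>q<r - 1. tau r powi (int q * d)) = (if int (r - 1) dvd d then of_nat (r - 1) else 0)"
proof -
  let ?z = "tau r powi d"
  have powers: "tau r powi (int q * d) = ?z ^ q" for q
    by (metis mult.commute power_int_mult power_int_of_nat)
  have "?z ^ (r - 1) = 1"
    using tau_powi_eq_1_iff[OF assms, of "int (r - 1) * d"] powers[of "r - 1"] by simp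
  then show ?thesis
    using tau_powi_eq_1_iff[OF assms, of d] geometric_sum[of ?z "r - 1"]
    by (cases "int (r - 1) dvd d") (simp_all add: powers)
qed

lemma tau_nonzero: "tau r \<noteq> 0"
  by (simp add: tau_def)

lemma power_int_sum: "w \<noteq> 0 \<Longrightarrow> w powi (\<Sum>i\<in>I. g i) = (\<Prod>i\<in>I. w powi g i)"
  for w :: "'a::field"
  by (induction I rule: infinite_finite_induct) (simp_all add: power_int_add)

lemma prod_if_const:
  "finite I \<Longrightarrow> (\<Prod>l\<in>I. if P l then a else 0) = (if \<forall>l\<in>I. P l then a ^ card I else 0)"
  for a :: "'a::comm_semiring_1"
  by (induction I rule: finite_induct) auto

section \<open>Fibre sums of the ideal I'\<close>

lemma Zprime_memI:
  assumes "I \<subseteq> {..<n}" "k + 1 \<le> card I" "\<forall>l<n. z l \<noteq> 0"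
    and on_I: "\<forall>l\<in>I. p l \<le> r - 2 \<and> z l = tau r ^ p l * w"
  shows "z \<in> Zprime n k r"
proof -
  have "finite I" using assms(1) finite_subset by blast
  define js where "js = take (k + 1) (sorted_list_of_set I)"
  have js: "length js = k + 1" "sorted_wrt (<) js" "set js \<subseteq> I"
    using assms(2) \<open>finite I\<close> set_take_subset[of "k + 1" "sorted_list_of_set I"]
    by (simp_all add: js_def sorted_wrt_take)
  have "map p js ! a \<le> r - 2 \<and> z (js ! a) = tau r ^ (map p js ! a) * w" if "a < k + 1" for a
  proof -
    have "js ! a \<in> I" using js nth_mem that by (metis subsetD)
    then show ?thesis using on_I that js(1) by simp
  qed
  then show ?thesis
    unfolding Zprime_def using js assms(1,3)
    by (intro CollectI conjI exI[of _ js] exI[of _ w] exI[of _ "map p js"]) auto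
qed

definition collapse :: "nat set \<Rightarrow> nat \<Rightarrow> (nat \<Rightarrow> int) \<Rightarrow> nat \<Rightarrow> int" where
  "collapse I i0 x l = (if l \<in> I then if l = i0 then (\<Sum>l'\<in>I. x l') else 0 else x l)"

lemma prod_powi_collapse:
  fixes y c :: "nat \<Rightarrow> 'a::field"
  assumes "I \<subseteq> {..<n}" "i0 \<in> I" "y i0 \<noteq> 0"
  shows "(\<Prod>i<n. (if i \<in> I then c i * y i0 else y i) powi x i)
       = (\<Prod>i\<in>I. c i powi x i) * (\<Prod>i<n. y i powi collapse I i0 x i)"
proof -
  have "finite I" using assms(1) finite_subset by blast
  have split: "prod g {..<n} = prod g ({..<n} - I) * prod g I" for g :: "nat \<Rightarrow> 'a"
    using prod.subset_diff[OF assms(1) finite_lessThan] .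
  have "(\<Prod>i<n. (if i \<in> I then c i * y i0 else y i) powi x i)
      = (\<Prod>i\<in>{..<n} - I. y i powi x i) * (\<Prod>i\<in>I. (c i * y i0) powi x i)"
    unfolding split by (intro arg_cong2[where f = "(*)"] prod.cong) auto
  also have "(\<Prod>i\<in>I. (c i * y i0) powi x i) = (\<Prod>i\<in>I. c i powi x i) * y i0 powi (\<Sum>i\<in>I. x i)"
    using assms(3) by (simp add: power_int_mult_distrib prod.distrib power_int_sum)
  also have "y i0 powi (\<Sum>i\<in>I. x i) = (\<Prod>i\<in>I. if i = i0 then y i0 powi (\<Sum>i\<in>I. x i) else 1)"
    using \<open>finite I\<close> assms(2) by simp
  also have "\<dots> = (\<Prod>i\<in>I. y i powi collapse I i0 x i)"
    by (intro prod.cong) (auto simp: collapse_def)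
  also have "(\<Prod>i\<in>{..<n} - I. y i powi x i) = (\<Prod>i\<in>{..<n} - I. y i powi collapse I i0 x i)"
    by (simp add: collapse_def)
  finally show ?thesis
    unfolding split[of "\<lambda>i. y i powi collapse I i0 x i"] by (simp add: ac_simps)
qed

lemma character_sum_congruent:
  fixes x lam :: "nat \<Rightarrow> int"
  assumes "r \<ge> 2" "finite I"
  shows "(\<Sum>p\<in>PiE I (\<lambda>_. {..<r - 1}). (\<Prod>l\<in>I. tau r powi (- (int (p l) * lam l)))
            * (\<Prod>l\<in>I. (tau r ^ p l) powi x l))
       = (\<Prod>l\<in>I. if int (r - 1) dvd (x l - lam l) then of_nat (r - 1) else 0)"
proof -
  have "(\<Prod>l\<in>I. tau r powi (- (int (p l) * lam l))) * (\<Prod>l\<in>I. (tau r ^ p l) powi x l)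
      = (\<Prod>l\<in>I. tau r powi (int (p l) * (x l - lam l)))" for p :: "nat \<Rightarrow> nat"
    by (simp add: prod.distrib[symmetric] power_int_mult[symmetric] power_int_add[symmetric]
        tau_nonzero algebra_simps flip: power_int_of_nat)
  then have "(\<Sum>p\<in>PiE I (\<lambda>_. {..<r - 1}). (\<Prod>l\<in>I. tau r powi (- (int (p l) * lam l)))
            * (\<Prod>l\<in>I. (tau r ^ p l) powi x l))
      = (\<Prod>l\<in>I. \<Sum>q<r - 1. tau r powi (int q * (x l - lam l)))"
    using prod_sum_PiE[OF assms(2), where B = "\<lambda>_. {..<r - 1}"
        and f = "\<lambda>l q. tau r powi (int q * (x l - lam l))"]
    by simp
  also have "\<dots> = (\<Prod>l\<in>I. if int (r - 1) dvd (x l - lam l) then of_nat (r - 1) else 0)"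
    by (intro prod.cong refl sum_tau_powi[OF assms(1)])
  finally show ?thesis .
qed

lemma Iprime_weighted_sum_zero:
  fixes f :: "(nat \<Rightarrow> int) \<Rightarrow> complex"
  assumes "r \<ge> 2" "f \<in> Iprime n k r" "I \<subseteq> {..<n}" "k + 1 \<le> card I" "i0 \<in> I"
    and y: "\<forall>l<n. y l \<noteq> 0"
  shows "(\<Sum>x | f x \<noteq> 0. f x * (\<Prod>l\<in>I. if int (r - 1) dvd (x l - lam l) then of_nat (r - 1) else 0)
            * (\<Prod>l<n. y l powi collapse I i0 x l)) = 0"
proof -
  define A where "A = {x. f x \<noteq> 0}"
  define P where "P = PiE I (\<lambda>_. {..<r - 1})"
  define T where "T p x = (\<Prod>l\<in>I. (tau r ^ p l) powi x l)" for p x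
  define E where "E p = (\<Prod>l\<in>I. tau r powi (- (int (p l) * lam l)))" for p
  define R where "R x = (\<Prod>l<n. y l powi collapse I i0 x l)" for x
  have "finite I" using assms(3) finite_subset by blast
  have "y i0 \<noteq> 0" using y assms(3,5) by auto
  have "(\<Sum>x\<in>A. f x * (T p x * R x)) = 0" if "p \<in> P" for p
  proof -
    have "(\<lambda>l. if l \<in> I then tau r ^ p l * y i0 else y l) \<in> Zprime n k r"
      using that tau_nonzero y \<open>y i0 \<noteq> 0\<close> assms(1,3,4)
      by (intro Zprime_memI[where p = p and w = "y i0"]) (auto simp: P_def PiE_iff)
    then have "lpeval n f (\<lambda>l. if l \<in> I then tau r ^ p l * y i0 else y l) = 0"
      using assms(2) unfolding Iprime_def by blast
    then show ?thesis
      unfolding lpeval_def A_def[symmetric] T_def R_def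
      using prod_powi_collapse[where y = y, OF assms(3,5) \<open>y i0 \<noteq> 0\<close>] by simp
  qed
  \<comment> \<open>averaging against the characters E keeps the exponents congruent to lam on I\<close>
  then have "0 = (\<Sum>p\<in>P. E p * (\<Sum>x\<in>A. f x * (T p x * R x)))" by simp
  also have "\<dots> = (\<Sum>x\<in>A. f x * (\<Sum>p\<in>P. E p * T p x) * R x)"
    by (simp add: sum_distrib_left sum_distrib_right sum.swap[of _ P] algebra_simps)
  finally show ?thesis
    unfolding A_def P_def E_def T_def R_def character_sum_congruent[OF assms(1) \<open>finite I\<close>] by simp
qed

lemma Iprime_fibre_sum_zero:
  fixes f :: "(nat \<Rightarrow> int) \<Rightarrow> complex"
  assumes "r \<ge> 2" "f \<in> Iprime n k r" "I \<subseteq> {..<n}" "k + 1 \<le> card I" "i0 \<in> I"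
  shows "(\<Sum>x | f x \<noteq> 0 \<and> (\<forall>l\<in>I. int (r - 1) dvd (x l - lam l))
            \<and> (\<forall>l<n. collapse I i0 x l = collapse I i0 lam l). f x) = 0"
proof -
  define A where "A = {x. f x \<noteq> 0}"
  define F where "F = {x \<in> A. \<forall>l<n. collapse I i0 x l = collapse I i0 lam l}"
  define c :: complex where "c = of_nat (r - 1) ^ card I"
  define cong where "cong x \<longleftrightarrow> (\<forall>l\<in>I. int (r - 1) dvd (x l - lam l))" for x
  have "finite I" using assms(3) finite_subset by blast
  have "finite A" using assms(2) unfolding A_def Iprime_def LV_def by auto
  have weight: "(\<Prod>l\<in>I. if int (r - 1) dvd (x l - lam l) then of_nat (r - 1) else 0)
      = (if cong x then c else 0)" for x
    unfolding cong_def c_def by (rule prod_if_const[OF \<open>finite I\<close>])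
  have "(\<Sum>x\<in>A. f x * (if cong x then c else 0)
          * (\<Prod>l<n. y l powi collapse I i0 x l)) = 0" if "\<forall>l<n. y l \<noteq> 0" for y
    using Iprime_weighted_sum_zero[OF assms that, where lam = lam]
    unfolding weight A_def[symmetric] .
  from laurent_vanishing_imp_fibre_sum_zero[OF \<open>finite A\<close> this]
  have "(\<Sum>x\<in>F. f x * (if cong x then c else 0)) = 0"
    by (simp add: F_def)
  moreover have "finite F" using \<open>finite A\<close> by (simp add: F_def)
  then have "(\<Sum>x\<in>F. f x * (if cong x then c else 0)) = c * (\<Sum>x | x \<in> F \<and> cong x. f x)"
    by (simp add: sum.inter_filter if_distrib sum_distrib_left mult.commute cong: if_cong)
  moreover have "c \<noteq> 0" using assms(1) by (simp add: c_def)
  ultimately show ?thesis by (simp add: A_def F_def cong_def conj_ac)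
qed

section \<open>Extremal exponent vectors\<close>

lemma shifted_parabola_le:
  fixes m a y :: int
  assumes "0 < m" "0 \<le> a" "a \<le> m" "m dvd y - a"
  shows "a * (a - m) \<le> y * (y - m)"
    and "y * (y - m) = a * (a - m) \<Longrightarrow> y = a \<or> a = 0 \<and> y = m \<or> a = m \<and> y = 0"
proof -
  obtain t where y: "y = a + m * t"
    using assms(4) by (metis dvdE add_diff_cancel_left' diff_add_cancel)
  have diff: "y * (y - m) - a * (a - m) = (m * t) * (2 * a + m * (t - 1))"
    unfolding y by (simp add: algebra_simps)
  consider "t = 0" | "1 \<le> t" | "t \<le> -1" by linarith
  then have "0 \<le> (m * t) * (2 * a + m * (t - 1))
    \<and> ((m * t) * (2 * a + m * (t - 1)) = 0 \<longrightarrow> t = 0 \<or> a = 0 \<and> t = 1 \<or> a = m \<and> t = -1)"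
  proof cases
    case 2
    have "m \<le> m * t" "0 \<le> m * (t - 1)" using 2 assms(1) by simp_all
    moreover have "a = 0 \<and> t = 1" if "2 * a + m * (t - 1) = 0"
    proof -
      have "a = 0" "m * (t - 1) = 0" using that \<open>0 \<le> m * (t - 1)\<close> assms(2) by linarith+
      then show ?thesis using assms(1) by simp
    qed
    ultimately show ?thesis using assms(1,2) by (auto simp: zero_le_mult_iff)
  next
    case 3
    have "m * t \<le> m * -1" "m * (t - 1) \<le> m * -2"
      using 3 assms(1) by (intro mult_left_mono; simp)+
    moreover have "a = m \<and> t = -1" if "2 * a + m * (t - 1) = 0"
    proof -
      have "a = m" "m * (t + 1) = 0"
        using that \<open>m * (t - 1) \<le> m * -2\<close> assms(3) by (linarith, simp add: algebra_simps)
      then show ?thesis using assms(1) by simp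
    qed
    ultimately show ?thesis using assms(1,3) by (auto simp: zero_le_mult_iff)
  qed simp
  then show "a * (a - m) \<le> y * (y - m)"
    and "y * (y - m) = a * (a - m) \<Longrightarrow> y = a \<or> a = 0 \<and> y = m \<or> a = m \<and> y = 0"
    using diff y by auto
qed

lemma sum_lt_sum_if_all_less:
  fixes P N :: "nat set"
  assumes "finite P" "finite N" "card P = card N" "P \<noteq> {}"
    and less: "\<And>a b. a \<in> P \<Longrightarrow> b \<in> N \<Longrightarrow> a < b"
  shows "(\<Sum>a\<in>P. int a) < (\<Sum>b\<in>N. int b)"
proof -
  have "Max P \<in> P" using assms(1,4) by simp
  have "(\<Sum>a\<in>P. int a) \<le> int (card P) * int (Max P)"
    using sum_mono[of P "\<lambda>a. int a" "\<lambda>_. int (Max P)"] assms(1) by simp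
  also have "\<dots> < int (card N) * (int (Max P) + 1)"
    using assms(1,3,4) card_gt_0_iff[of P] by simp
  also have "\<dots> \<le> (\<Sum>b\<in>N. int b)"
    using sum_mono[of N "\<lambda>_. int (Max P) + 1" "\<lambda>b. int b"] less[OF \<open>Max P \<in> P\<close>] by fastforce
  finally show ?thesis .
qed

definition sumsq :: "nat \<Rightarrow> (nat \<Rightarrow> int) \<Rightarrow> int" where
  "sumsq n x = (\<Sum>l<n. (x l)\<^sup>2)"

definition moment :: "nat \<Rightarrow> (nat \<Rightarrow> int) \<Rightarrow> int" where
  "moment n x = (\<Sum>l<n. int l * x l)"

(* x ranges over the fibre of lam in the sense of Iprime_fibre_sum_zero. *)
locale window_shift =
  fixes n :: nat and I :: "nat set" and c m :: int and lam x :: "nat \<Rightarrow> int"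
  assumes m_pos: "0 < m"
    and I_sub: "I \<subseteq> {..<n}"
    and outside: "\<And>l. l \<notin> I \<Longrightarrow> x l = lam l"
    and sum_eq: "(\<Sum>l\<in>I. x l) = (\<Sum>l\<in>I. lam l)"
    and congruent: "\<And>l. l \<in> I \<Longrightarrow> m dvd x l - lam l"
    and window: "\<And>l. l \<in> I \<Longrightarrow> c \<le> lam l \<and> lam l \<le> c + m"
    and bottom_before_top: "\<And>l1 l2. l1 \<in> I \<Longrightarrow> l2 \<in> I \<Longrightarrow> lam l1 = c \<Longrightarrow> lam l2 = c + m \<Longrightarrow> l1 < l2"
begin

lemma finite_I: "finite I"
  using I_sub finite_subset by blast

lemma sum_diff_eq_sum_I: "(\<Sum>l<n. f l (x l)) - (\<Sum>l<n. f l (lam l)) = (\<Sum>l\<in>I. f l (x l) - f l (lam l))"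
  for f :: "nat \<Rightarrow> int \<Rightarrow> int"
proof -
  have "(\<Sum>l<n. f l (x l) - f l (lam l)) = (\<Sum>l\<in>I. f l (x l) - f l (lam l))"
    using I_sub outside by (intro sum.mono_neutral_right) auto
  then show ?thesis by (simp add: sum_subtractf)
qed

definition excess :: "nat \<Rightarrow> int" where
  "excess l = (x l - c) * (x l - c - m) - (lam l - c) * (lam l - c - m)"

lemma shifted_parabola_le_at:
  assumes "l \<in> I"
  shows "(lam l - c) * (lam l - c - m) \<le> (x l - c) * (x l - c - m)"
    and "(x l - c) * (x l - c - m) = (lam l - c) * (lam l - c - m)
      \<Longrightarrow> x l = lam l \<or> lam l = c \<and> x l = c + m \<or> lam l = c + m \<and> x l = c"
proof -
  have "0 \<le> lam l - c" "lam l - c \<le> m" "m dvd (x l - c) - (lam l - c)"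
    using window[OF assms] congruent[OF assms] by simp_all
  note parabola = shifted_parabola_le[OF m_pos this]
  show "(lam l - c) * (lam l - c - m) \<le> (x l - c) * (x l - c - m)"
    using parabola(1) .
  show "x l = lam l \<or> lam l = c \<and> x l = c + m \<or> lam l = c + m \<and> x l = c"
    if "(x l - c) * (x l - c - m) = (lam l - c) * (lam l - c - m)"
    using parabola(2)[OF that] by auto
qed

lemma excess_nonneg: "l \<in> I \<Longrightarrow> 0 \<le> excess l"
  using shifted_parabola_le_at(1) by (simp add: excess_def)

lemma excess_eq_0_imp:
  "l \<in> I \<Longrightarrow> excess l = 0 \<Longrightarrow> x l = lam l \<or> lam l = c \<and> x l = c + m \<or> lam l = c + m \<and> x l = c"
  using shifted_parabola_le_at(2) by (simp add: excess_def)

lemma sumsq_diff: "sumsq n x - sumsq n lam = (\<Sum>l\<in>I. excess l)"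
proof -
  have "sumsq n x - sumsq n lam = (\<Sum>l\<in>I. (x l)\<^sup>2 - (lam l)\<^sup>2)"
    using sum_diff_eq_sum_I[of "\<lambda>_ v. v\<^sup>2"] by (simp add: sumsq_def)
  also have "\<dots> = (\<Sum>l\<in>I. excess l + (m + 2 * c) * (x l - lam l))"
    by (intro sum.cong) (simp_all add: excess_def power2_eq_square algebra_simps)
  also have "\<dots> = (\<Sum>l\<in>I. excess l)"
    using sum_eq by (simp add: sum.distrib sum_distrib_left[symmetric] sum_subtractf)
  finally show ?thesis .
qed

lemma sumsq_le: "sumsq n lam \<le> sumsq n x"
  using sumsq_diff excess_nonneg sum_nonneg[of I excess] by simp

lemma moment_less:
  assumes "sumsq n x = sumsq n lam" "x \<noteq> lam"
  shows "moment n x < moment n lam"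
proof -
  define Up where "Up = {l \<in> I. x l \<noteq> lam l \<and> lam l = c}"
  define Down where "Down = {l \<in> I. x l \<noteq> lam l \<and> lam l \<noteq> c}"
  have "finite Up" "finite Down" "Up \<subseteq> I" "Down \<subseteq> I"
    using finite_I by (auto simp: Up_def Down_def)
  have "sum excess I = 0" using assms(1) sumsq_diff by simp
  then have no_excess: "\<forall>l\<in>I. excess l = 0"
    using sum_nonneg_eq_0_iff[OF finite_I, of excess] excess_nonneg by blast
  then have step: "x l - lam l = (if l \<in> Up then m else 0) - (if l \<in> Down then m else 0)"
    if "l \<in> I" for l
    using excess_eq_0_imp[OF that] m_pos that by (auto simp: Up_def Down_def)
  have weighted: "(\<Sum>l\<in>I. g l * (x l - lam l)) = m * ((\<Sum>l\<in>Up. g l) - (\<Sum>l\<in>Down. g l))" for g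
  proof -
    have "(\<Sum>l\<in>I. g l * (x l - lam l))
        = (\<Sum>l\<in>I. m * (if l \<in> Up then g l else 0) - m * (if l \<in> Down then g l else 0))"
      by (intro sum.cong refl, subst step) auto
    also have "\<dots> = m * ((\<Sum>l\<in>I. if l \<in> Up then g l else 0) - (\<Sum>l\<in>I. if l \<in> Down then g l else 0))"
      by (simp add: sum_subtractf sum_distrib_left right_diff_distrib)
    finally show ?thesis
      using \<open>Up \<subseteq> I\<close> \<open>Down \<subseteq> I\<close>
      by (simp add: sum.inter_restrict[OF finite_I, symmetric] Int_absorb1)
  qed
  have "m * (int (card Up) - int (card Down)) = 0"
    using weighted[of "\<lambda>_. 1"] sum_eq by (simp add: sum_subtractf)
  then have "card Up = card Down" using m_pos by simp
  obtain l0 where "x l0 \<noteq> lam l0" using assms(2) by blast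
  then have "l0 \<in> Up \<or> l0 \<in> Down" using outside by (auto simp: Up_def Down_def)
  then have "Up \<noteq> {}" using \<open>card Up = card Down\<close> \<open>finite Down\<close> by auto
  have "a < b" if "a \<in> Up" "b \<in> Down" for a b
    using that no_excess excess_eq_0_imp[of b] bottom_before_top[of a b]
    by (auto simp: Up_def Down_def)
  then have "(\<Sum>a\<in>Up. int a) < (\<Sum>b\<in>Down. int b)"
    using sum_lt_sum_if_all_less \<open>finite Up\<close> \<open>finite Down\<close> \<open>card Up = card Down\<close> \<open>Up \<noteq> {}\<close>
    by blast
  moreover have "moment n x - moment n lam = m * ((\<Sum>a\<in>Up. int a) - (\<Sum>b\<in>Down. int b))"
    using sum_diff_eq_sum_I[of "\<lambda>l v. int l * v"] weighted[of int]
    by (simp add: moment_def algebra_simps)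
  ultimately show ?thesis
    using mult_pos_neg[OF m_pos, of "(\<Sum>a\<in>Up. int a) - (\<Sum>b\<in>Down. int b)"] by linarith
qed

end

lemma window_shift_if_same_fibre:
  assumes "0 < m" "I \<subseteq> {..<n}" "j \<in> I" "x \<in> Pn n" "lam \<in> Pn n"
    and same_fibre: "\<forall>l<n. collapse I j x l = collapse I j lam l"
    and "\<forall>l\<in>I. m dvd x l - lam l"
    and "\<And>l. l \<in> I \<Longrightarrow> lam j \<le> lam l \<and> lam l \<le> lam j + m"
    and "\<And>l1 l2. l1 \<in> I \<Longrightarrow> l2 \<in> I \<Longrightarrow> lam l1 = lam j \<Longrightarrow> lam l2 = lam j + m \<Longrightarrow> l1 < l2"
  shows "window_shift n I (lam j) m lam x"
proof
  show "x l = lam l" if "l \<notin> I" for l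
    using same_fibre that assms(4,5) by (cases "l < n") (auto simp: collapse_def Pn_def)
  show "(\<Sum>l\<in>I. x l) = (\<Sum>l\<in>I. lam l)"
    using same_fibre assms(2,3) by (auto simp: collapse_def)
qed (use assms in auto)

lemma nbhd_window:
  assumes nbhd: "nbhd n lam i j (int k + 1) (int r - 1)" and "1 \<le> k" "2 \<le> r"
  obtains I where "I \<subseteq> {..<n}" "k + 1 \<le> card I" "j \<in> I"
    "\<And>l. l \<in> I \<Longrightarrow> lam j \<le> lam l \<and> lam l \<le> lam j + int (r - 1)"
    "\<And>l1 l2. l1 \<in> I \<Longrightarrow> l2 \<in> I \<Longrightarrow> lam l1 = lam j \<Longrightarrow> lam l2 = lam j + int (r - 1) \<Longrightarrow> l1 < l2"
proof
  define I where "I = {l. l < n \<and> (lam l < lam i \<or> lam l = lam i \<and> i \<le> l)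
                               \<and> (lam j < lam l \<or> lam l = lam j \<and> l \<le> j)}"
  define above where "above a = {l. l < n \<and> (lam a < lam l \<or> lam l = lam a \<and> l < a)}" for a
  have "i < n" "j < n" using nbhd by (auto simp: nbhd_def)
  have ranks: "card (above j) = card (above i) + k"
    using nbhd by (simp add: nbhd_def rho_def rk_def above_def)
  have close: "lam i - lam j \<le> int r - 2 \<or> lam i - lam j = int r - 1 \<and> j < i"
    using nbhd by (auto simp: nbhd_def)
  show "I \<subseteq> {..<n}" by (auto simp: I_def)
  then have "finite I" using finite_subset by blast
  have "lam j < lam i \<or> lam i = lam j \<and> i \<le> j"
  proof (rule ccontr)
    assume "\<not> ?thesis"
    then have "above j \<subseteq> above i" by (auto simp: above_def)
    then have "card (above j) \<le> card (above i)" by (intro card_mono) (auto simp: above_def)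
    with ranks \<open>1 \<le> k\<close> show False by simp
  qed
  then show "j \<in> I" using \<open>j < n\<close> by (auto simp: I_def)
  have "above j \<subseteq> above i \<union> (I - {j})" by (auto simp: above_def I_def)
  then have "card (above j) \<le> card (above i \<union> (I - {j}))"
    using \<open>finite I\<close> by (intro card_mono) (auto simp: above_def)
  also have "\<dots> \<le> card (above i) + card (I - {j})" by (rule card_Un_le)
  finally have "card (above j) \<le> card (above i) + card (I - {j})" .
  moreover have "0 < card I" using \<open>j \<in> I\<close> \<open>finite I\<close> card_gt_0_iff by blast
  ultimately show "k + 1 \<le> card I" using ranks \<open>j \<in> I\<close> \<open>finite I\<close> by simp
  show "lam j \<le> lam l \<and> lam l \<le> lam j + int (r - 1)" if "l \<in> I" for l
    using that close \<open>2 \<le> r\<close> by (auto simp: I_def)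
  show "l1 < l2" if "l1 \<in> I" "l2 \<in> I" "lam l1 = lam j" "lam l2 = lam j + int (r - 1)" for l1 l2
    using that close \<open>2 \<le> r\<close> by (auto simp: I_def)
qed

lemma ex_max_then_min:
  fixes f g :: "'a \<Rightarrow> 'b::linorder"
  assumes "finite A" "A \<noteq> {}"
  obtains a where "a \<in> A" "\<And>x. x \<in> A \<Longrightarrow> f x \<le> f a"
    "\<And>x. x \<in> A \<Longrightarrow> f x = f a \<Longrightarrow> g a \<le> g x"
proof -
  define A' where "A' = {x \<in> A. f x = Max (f ` A)}"
  have "Max (f ` A) \<in> f ` A" using assms by simp
  then have "finite A'" "A' \<noteq> {}" using assms(1) by (auto simp: A'_def)
  then have "Min (g ` A') \<in> g ` A'" by simp
  then obtain a where "a \<in> A'" "g a = Min (g ` A')" by (metis imageE)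
  then show ?thesis
    using that[of a] assms(1) \<open>finite A'\<close> by (auto simp: A'_def)
qed

lemma Iprime_eq_0_if_vanishes_on_B:
  fixes f :: "(nat \<Rightarrow> int) \<Rightarrow> complex"
  assumes "2 \<le> r" "1 \<le> k" and f: "f \<in> Iprime n k r" and vanishes: "\<forall>lam\<in>Bkr n k r. f lam = 0"
  shows "f = 0"
proof (rule ccontr)
  define A where "A = {x. f x \<noteq> 0}"
  assume "f \<noteq> 0"
  then have "A \<noteq> {}" by (auto simp: A_def fun_eq_iff)
  moreover have "finite A" "A \<subseteq> Pn n" using f by (auto simp: A_def Iprime_def LV_def)
  ultimately obtain lam where "lam \<in> A" and sumsq_max: "\<And>x. x \<in> A \<Longrightarrow> sumsq n x \<le> sumsq n lam"
    and moment_min: "\<And>x. x \<in> A \<Longrightarrow> sumsq n x = sumsq n lam \<Longrightarrow> moment n lam \<le> moment n x"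
    using ex_max_then_min[of A "sumsq n" "moment n"] by blast
  then have "lam \<in> Pn n" "lam \<notin> Bkr n k r" using \<open>A \<subseteq> Pn n\<close> vanishes by (auto simp: A_def)
  then obtain i j where "nbhd n lam i j (int k + 1) (int r - 1)" by (auto simp: Bkr_def)
  then obtain I where I: "I \<subseteq> {..<n}" "k + 1 \<le> card I" "j \<in> I"
    and window: "\<And>l. l \<in> I \<Longrightarrow> lam j \<le> lam l \<and> lam l \<le> lam j + int (r - 1)"
    and ordered: "\<And>l1 l2. l1 \<in> I \<Longrightarrow> l2 \<in> I \<Longrightarrow> lam l1 = lam j
                       \<Longrightarrow> lam l2 = lam j + int (r - 1) \<Longrightarrow> l1 < l2"
    using nbhd_window assms(1,2) by blast
  define T where "T = {x. f x \<noteq> 0 \<and> (\<forall>l\<in>I. int (r - 1) dvd (x l - lam l))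
                          \<and> (\<forall>l<n. collapse I j x l = collapse I j lam l)}"
  have "T \<subseteq> {lam}"
  proof
    fix x assume "x \<in> T"
    then have "x \<in> A" and same_fibre: "\<forall>l<n. collapse I j x l = collapse I j lam l"
      and congruent: "\<forall>l\<in>I. int (r - 1) dvd (x l - lam l)"
      by (auto simp: T_def A_def)
    interpret window_shift n I "lam j" "int (r - 1)" lam x
      using \<open>x \<in> A\<close> \<open>A \<subseteq> Pn n\<close> \<open>lam \<in> Pn n\<close> assms(1) I(1,3) same_fibre congruent window ordered
      by (intro window_shift_if_same_fibre) auto
    have "sumsq n x = sumsq n lam"
      using sumsq_le sumsq_max[OF \<open>x \<in> A\<close>] by simp
    then show "x \<in> {lam}"
      using moment_less moment_min[OF \<open>x \<in> A\<close>] by fastforce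
  qed
  moreover have "lam \<in> T" using \<open>lam \<in> A\<close> by (simp add: T_def A_def)
  ultimately have "T = {lam}" by blast
  then have "f lam = 0"
    using Iprime_fibre_sum_zero[OF assms(1) f I, of lam] by (simp add: T_def)
  then show False using \<open>lam \<in> A\<close> by (simp add: A_def)
qed

section \<open>Specialisation at v = 1\<close>

(* Since u = v^N, the limit u = 1 is v = 1. Evaluation at v = 1 is only defined here on fractions
   whose denominator is a power of v, which suffices because t and q are monomials in v. *)
definition value_at_1 :: "'a::field poly fract \<Rightarrow> 'a \<Rightarrow> bool" where
  "value_at_1 X c \<longleftrightarrow> (\<exists>A e. X = Fract A (monom 1 e) \<and> poly A 1 = c)"

definition monomial_at_1 :: "'a::field poly fract \<Rightarrow> 'a \<Rightarrow> bool" where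
  "monomial_at_1 X c \<longleftrightarrow> c \<noteq> 0 \<and> (\<exists>e1 e2. X = Fract (monom c e1) (monom 1 e2))"

lemma value_at_1_add:
  assumes "value_at_1 X a" "value_at_1 Y b"
  shows "value_at_1 (X + Y) (a + b)"
proof -
  obtain A d B e where "X = Fract A (monom 1 d)" "poly A 1 = a"
    and "Y = Fract B (monom 1 e)" "poly B 1 = b"
    using assms unfolding value_at_1_def by blast
  then have "X + Y = Fract (A * monom 1 e + B * monom 1 d) (monom 1 (d + e))"
    "poly (A * monom 1 e + B * monom 1 d) 1 = a + b"
    by (simp_all add: mult_monom poly_monom)
  then show ?thesis unfolding value_at_1_def by blast
qed

lemma value_at_1_mult:
  assumes "value_at_1 X a" "value_at_1 Y b"
  shows "value_at_1 (X * Y) (a * b)"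
proof -
  obtain A d B e where "X = Fract A (monom 1 d)" "poly A 1 = a"
    and "Y = Fract B (monom 1 e)" "poly B 1 = b"
    using assms unfolding value_at_1_def by blast
  then have "X * Y = Fract (A * B) (monom 1 (d + e))" "poly (A * B) 1 = a * b"
    by (simp_all add: mult_monom)
  then show ?thesis unfolding value_at_1_def by blast
qed

lemma value_at_1_sum:
  fixes F :: "'b \<Rightarrow> 'a::field poly fract"
  shows "finite S \<Longrightarrow> (\<And>x. x \<in> S \<Longrightarrow> value_at_1 (F x) (G x)) \<Longrightarrow> value_at_1 (\<Sum>x\<in>S. F x) (\<Sum>x\<in>S. G x)"
proof (induction S rule: finite_induct)
  case empty
  show ?case
    unfolding value_at_1_def by (intro exI[of _ 0]) (simp add: fract_collapse)
qed (simp add: value_at_1_add)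

lemma value_at_1_const: "value_at_1 (Fract R 1) (poly R 1)"
  unfolding value_at_1_def by (intro exI[of _ R] exI[of _ 0]) (simp add: one_pCons)

lemma value_at_1_zero:
  assumes "value_at_1 0 c"
  shows "c = 0"
proof -
  obtain A e where "Fract A (monom 1 e) = Fract 0 1" "poly A 1 = c"
    using assms unfolding value_at_1_def by (auto simp: fract_collapse)
  then show ?thesis by (simp add: eq_fract)
qed

lemma monomial_at_1_value: "monomial_at_1 X c \<Longrightarrow> value_at_1 X c"
  unfolding monomial_at_1_def value_at_1_def by (auto simp: poly_monom)

lemma monomial_at_1_nonzero: "monomial_at_1 X c \<Longrightarrow> X \<noteq> 0"
  using monomial_at_1_value value_at_1_zero monomial_at_1_def by blast

lemma monomial_at_1_const: "c \<noteq> 0 \<Longrightarrow> monomial_at_1 (Fract [:c:] 1) c"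
  unfolding monomial_at_1_def by (intro conjI exI[of _ 0]) (simp_all add: monom_0 one_pCons)

lemma monomial_at_1_one: "monomial_at_1 1 1"
  unfolding monomial_at_1_def
  by (intro conjI exI[of _ 0]) (simp_all add: monom_0 one_pCons[symmetric] fract_collapse)

lemma monomial_at_1_mult:
  assumes "monomial_at_1 X a" "monomial_at_1 Y b"
  shows "monomial_at_1 (X * Y) (a * b)"
proof -
  obtain d1 d2 e1 e2 where "a \<noteq> 0" "X = Fract (monom a d1) (monom 1 d2)"
    "b \<noteq> 0" "Y = Fract (monom b e1) (monom 1 e2)"
    using assms unfolding monomial_at_1_def by blast
  then have "a * b \<noteq> 0" "X * Y = Fract (monom (a * b) (d1 + e1)) (monom 1 (d2 + e2))"
    by (simp_all add: mult_monom)
  then show ?thesis unfolding monomial_at_1_def by blast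
qed

lemma monomial_at_1_inverse:
  assumes "monomial_at_1 X a"
  shows "monomial_at_1 (inverse X) (inverse a)"
proof -
  obtain d1 d2 where "a \<noteq> 0" "X = Fract (monom a d1) (monom 1 d2)"
    using assms unfolding monomial_at_1_def by blast
  then have "inverse X = Fract (monom (inverse a) d2) (monom 1 d1)"
    by (simp add: eq_fract mult_monom add.commute)
  then show ?thesis using \<open>a \<noteq> 0\<close> unfolding monomial_at_1_def by auto
qed

lemma monomial_at_1_power: "monomial_at_1 X a \<Longrightarrow> monomial_at_1 (X ^ d) (a ^ d)"
  by (induction d) (auto intro: monomial_at_1_mult monomial_at_1_one)

lemma monomial_at_1_power_int: "monomial_at_1 X a \<Longrightarrow> monomial_at_1 (X powi d) (a powi d)"
  unfolding power_int_def by (auto intro: monomial_at_1_power monomial_at_1_inverse)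

lemma monomial_at_1_prod:
  "finite S \<Longrightarrow> (\<And>x. x \<in> S \<Longrightarrow> monomial_at_1 (F x) (G x)) \<Longrightarrow> monomial_at_1 (\<Prod>x\<in>S. F x) (\<Prod>x\<in>S. G x)"
  by (induction S rule: finite_induct) (auto intro: monomial_at_1_mult monomial_at_1_one)

lemma monomial_at_1_uK: "monomial_at_1 (uK N) 1"
  unfolding monomial_at_1_def uK_def
  by (intro conjI exI[of _ N] exI[of _ 0]) (simp_all add: one_pCons)

lemma monomial_at_1_tK: "monomial_at_1 (tK N k r) 1"
  unfolding tK_def using monomial_at_1_power[OF monomial_at_1_uK] by simp

lemma monomial_at_1_qK: "monomial_at_1 (qK N k r) (tau r)"
  unfolding qK_def
  using monomial_at_1_mult[OF monomial_at_1_const[OF tau_nonzero]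
      monomial_at_1_inverse[OF monomial_at_1_power[OF monomial_at_1_uK]]]
  by simp

lemma ex_sorted_enumeration_by_key:
  fixes J :: "nat set" and p :: "nat \<Rightarrow> nat"
  assumes "finite J"
  obtains ch where "set ch = J" "sorted_wrt (<) (map (\<lambda>l. (p l, l)) ch)"
proof
  define ks where "ks = sorted_list_of_set ((\<lambda>l. (p l, l)) ` J)"
  have "map (\<lambda>l. (p l, l)) (map snd ks) = ks"
    using assms by (auto simp: ks_def intro: map_idI)
  then show "sorted_wrt (<) (map (\<lambda>l. (p l, l)) (map snd ks))"
    by (simp add: ks_def)
  show "set (map snd ks) = J"
    using assms by (force simp: ks_def)
qed

lemma sum_diff_telescope_nat:
  fixes h :: "nat \<Rightarrow> nat"
  assumes "\<And>a. a < k \<Longrightarrow> h a \<le> h (Suc a)"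
  shows "(\<Sum>a<k. h (Suc a) - h a) = h k - h 0 \<and> h 0 \<le> h k"
  using assms by (induction k) (auto simp: less_Suc_eq intro: le_trans)

lemma Zprime_elim:
  assumes "zb \<in> Zprime n k r"
  obtains J w p where "J \<subseteq> {..<n}" "card J = k + 1" "w \<noteq> 0" "\<forall>l<n. zb l \<noteq> 0"
    "\<And>l. l \<in> J \<Longrightarrow> p l \<le> r - 2 \<and> zb l = tau r ^ p l * w"
proof -
  obtain js w ps where zb_nonzero: "\<forall>l<n. zb l \<noteq> 0"
    and js: "length js = k + 1" "sorted_wrt (<) js" "set js \<subseteq> {..<n}"
    and ps: "\<forall>a<k + 1. ps ! a \<le> r - 2 \<and> zb (js ! a) = tau r ^ (ps ! a) * w"
    using assms unfolding Zprime_def by blast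
  have "\<exists>e. e \<le> r - 2 \<and> zb l = tau r ^ e * w" if l: "l \<in> set js" for l
  proof -
    obtain a where "a < k + 1" "l = js ! a" using l js(1) by (auto simp: in_set_conv_nth)
    then show ?thesis using ps by blast
  qed
  then obtain p where p: "\<And>l. l \<in> set js \<Longrightarrow> p l \<le> r - 2 \<and> zb l = tau r ^ p l * w"
    by metis
  have "js ! 0 \<in> set js" using js(1) by simp
  then have "w \<noteq> 0" using p zb_nonzero js(3) by fastforce
  moreover have "card (set js) = k + 1" using js(1,2) by (simp add: distinct_card strict_sorted_iff)
  ultimately show ?thesis using that js(3) zb_nonzero p by blast
qed

lemma Zkr_memI:
  fixes z :: "nat \<Rightarrow> 'a::field"
  assumes "distinct ch" "length ch = k + 1" "set ch \<subseteq> {..<n}" "\<forall>l<n. z l \<noteq> 0"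
    and h_less: "\<And>a b. a < b \<Longrightarrow> b < k + 1 \<Longrightarrow> h a < h b \<or> h a = h b \<and> ch ! a < ch ! b"
    and "h k - h 0 \<le> r - 2"
    and z_ch: "\<And>a. a < k + 1 \<Longrightarrow> z (ch ! a) = W * t ^ a * q ^ (h a - h 0)"
  shows "z \<in> Zkr n k r t q"
proof -
  have h_mono: "h a \<le> h b" if "a \<le> b" "b < k + 1" for a b
    using that h_less[of a b] by (cases "a = b") auto
  define s where "s = map (\<lambda>a. h (Suc a) - h a) [0..<k]"
  have "sum_list s = (\<Sum>a<k. h (Suc a) - h a)"
    by (simp add: s_def sum_list_sum_nth atLeast0LessThan)
  also have "\<dots> = h k - h 0"
    using sum_diff_telescope_nat[of k h] h_mono by simp
  finally have "sum_list s \<le> r - 2" using assms(6) by simp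
  have "z (ch ! (a + 1)) = z (ch ! a) * t * q ^ (s ! a) \<and> (s ! a = 0 \<longrightarrow> ch ! a < ch ! (a + 1))"
    if "a < k" for a
  proof
    have "h 0 \<le> h a" "h a \<le> h (Suc a)" using h_mono that by simp_all
    then have "h (Suc a) - h 0 = (h a - h 0) + (h (Suc a) - h a)" by simp
    then show "z (ch ! (a + 1)) = z (ch ! a) * t * q ^ (s ! a)"
      using that by (simp add: z_ch s_def power_add algebra_simps)
    show "s ! a = 0 \<longrightarrow> ch ! a < ch ! (a + 1)"
      using h_less[of a "Suc a"] \<open>h a \<le> h (Suc a)\<close> that by (auto simp: s_def)
  qed
  then show ?thesis
    unfolding Zkr_def using assms(1-4) \<open>sum_list s \<le> r - 2\<close>
    by (intro CollectI conjI exI[of _ ch] exI[of _ s]) (auto simp: s_def)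
qed

(* Ordering the coordinates on J by (exponent of tau, index), consecutive ones differ by a factor
   t * q^s with s = 0 only for increasing indices, and t, q specialise to 1, tau. *)
lemma Zprime_lifts_to_Zkr:
  fixes zb :: "nat \<Rightarrow> complex"
  assumes "zb \<in> Zprime n k r"
  shows "\<exists>z \<in> Zkr n k r (tK N k r) (qK N k r). \<forall>l<n. monomial_at_1 (z l) (zb l)"
proof -
  obtain J w p where J: "J \<subseteq> {..<n}" "card J = k + 1" and "w \<noteq> 0"
    and zb_nonzero: "\<forall>l<n. zb l \<noteq> 0" and p: "\<And>l. l \<in> J \<Longrightarrow> p l \<le> r - 2 \<and> zb l = tau r ^ p l * w"
    using Zprime_elim[OF assms] by blast
  then have "finite J" using finite_subset by blast
  obtain ch where "set ch = J" and sorted_keys: "sorted_wrt (<) (map (\<lambda>l. (p l, l)) ch)"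
    using ex_sorted_enumeration_by_key[OF \<open>finite J\<close>] by blast
  then have "distinct ch" "length ch = k + 1"
    using J(2) by (auto simp: distinct_map strict_sorted_iff distinct_card[symmetric])
  define h where "h a = p (ch ! a)" for a
  have h_less: "h a < h b \<or> h a = h b \<and> ch ! a < ch ! b" if "a < b" "b < k + 1" for a b
    using sorted_wrt_nth_less[OF sorted_keys, of a b] that \<open>length ch = k + 1\<close>
    by (auto simp: h_def)
  define idx where "idx l = (THE a. a < k + 1 \<and> ch ! a = l)" for l
  have idx: "idx (ch ! a) = a" if "a < k + 1" for a
    using that \<open>distinct ch\<close> \<open>length ch = k + 1\<close>
    by (auto simp: idx_def nth_eq_iff_index_eq intro!: the_equality)
  define W where "W = Fract [: tau r ^ h 0 * w :] 1"
  define z where "z l = (if l \<in> J then W * tK N k r ^ idx l * qK N k r ^ (p l - h 0)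
                                  else Fract [: zb l :] 1)" for l
  have z_ch: "z (ch ! a) = W * tK N k r ^ a * qK N k r ^ (h a - h 0)" if "a < k + 1" for a
    using that nth_mem[of a ch] \<open>set ch = J\<close> \<open>length ch = k + 1\<close> by (simp add: z_def idx h_def)
  have z_monomial: "monomial_at_1 (z l) (zb l)" if "l < n" for l
  proof (cases "l \<in> J")
    case True
    then obtain a where a: "a < k + 1" "l = ch ! a"
      using \<open>set ch = J\<close> \<open>length ch = k + 1\<close> by (auto simp: in_set_conv_nth)
    have "monomial_at_1 (z l) (tau r ^ h 0 * w * 1 ^ a * tau r ^ (h a - h 0))"
      unfolding z_ch[OF a(1), folded a(2)] W_def using \<open>w \<noteq> 0\<close> tau_nonzero
      by (intro monomial_at_1_mult monomial_at_1_power monomial_at_1_const monomial_at_1_tK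
          monomial_at_1_qK) simp
    moreover have "h 0 \<le> h a" using h_less[of 0 a] a(1) by (cases "a = 0") auto
    then have "tau r ^ h 0 * w * 1 ^ a * tau r ^ (h a - h 0) = zb l"
      using p[OF True] a by (simp add: h_def power_add[symmetric] algebra_simps)
    ultimately show ?thesis by simp
  next
    case False
    then show ?thesis using zb_nonzero that by (simp add: z_def monomial_at_1_const)
  qed
  have "h k \<le> r - 2"
    using p nth_mem[of k ch] \<open>set ch = J\<close> \<open>length ch = k + 1\<close> by (simp add: h_def)
  then have "h k - h 0 \<le> r - 2" by simp
  moreover have "\<forall>l<n. z l \<noteq> 0" using z_monomial monomial_at_1_nonzero by blast
  ultimately have "z \<in> Zkr n k r (tK N k r) (qK N k r)"
    using \<open>distinct ch\<close> \<open>length ch = k + 1\<close> \<open>set ch = J\<close> J(1)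
    by (intro Zkr_memI[where h = h and W = W, OF _ _ _ _ h_less _ z_ch]) auto
  then show ?thesis using z_monomial by blast
qed

lemma ex_common_denominator:
  fixes f :: "'b \<Rightarrow> 'a::field poly fract"
  assumes "finite A"
  obtains D P where "D \<noteq> 0" "\<And>x. x \<in> A \<Longrightarrow> f x * Fract D 1 = Fract (P x) 1"
  using assms
proof (induction A arbitrary: thesis rule: finite_induct)
  case empty
  show ?case by (rule empty.prems[of 1 "\<lambda>_. 0"]) simp_all
next
  case (insert x F)
  obtain D P where "D \<noteq> 0" and P: "\<And>y. y \<in> F \<Longrightarrow> f y * Fract D 1 = Fract (P y) 1"
    using insert.IH by blast
  obtain a b where "f x = Fract a b" "b \<noteq> 0" by (cases "f x")
  show ?case
  proof (rule insert.prems[of "D * b" "\<lambda>y. if y = x then a * D else P y * b"])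
    show "D * b \<noteq> 0" using \<open>D \<noteq> 0\<close> \<open>b \<noteq> 0\<close> by simp
    fix y assume "y \<in> insert x F"
    then show "f y * Fract (D * b) 1 = Fract (if y = x then a * D else P y * b) 1"
    proof
      assume "y = x"
      then show ?thesis using \<open>f x = Fract a b\<close> \<open>b \<noteq> 0\<close> by (simp add: eq_fract ac_simps)
    next
      assume "y \<in> F"
      have "f y * Fract (D * b) 1 = f y * Fract D 1 * Fract b 1"
        by (simp add: mult.assoc)
      then show ?thesis using P[OF \<open>y \<in> F\<close>] \<open>y \<in> F\<close> \<open>x \<notin> F\<close> by auto
    qed
  qed
qed

lemma ex_scaling_to_polys_not_all_vanishing_at_1:
  fixes f :: "'b \<Rightarrow> 'a::field poly fract"
  assumes "finite A" "x0 \<in> A" "f x0 \<noteq> 0"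
  obtains c R where "\<And>x. x \<in> A \<Longrightarrow> c * f x = Fract (R x) 1" "\<exists>x\<in>A. poly (R x) 1 \<noteq> 0"
proof -
  obtain D P where "D \<noteq> 0" and P: "\<And>x. x \<in> A \<Longrightarrow> f x * Fract D 1 = Fract (P x) 1"
    using ex_common_denominator[OF assms(1)] by blast
  define A' where "A' = {x \<in> A. P x \<noteq> 0}"
  have "Fract D 1 \<noteq> 0" using \<open>D \<noteq> 0\<close> by (simp add: Zero_fract_def eq_fract)
  then have "x0 \<in> A'"
    using P[OF assms(2)] assms(2,3) by (auto simp: A'_def fract_collapse)
  then obtain x1 where "x1 \<in> A'" and x1_min: "\<And>x. x \<in> A' \<Longrightarrow> order 1 (P x1) \<le> order 1 (P x)"
    using ex_has_least_nat[of "\<lambda>x. x \<in> A'" x0 "\<lambda>x. order 1 (P x)"] by blast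
  define E :: "'a poly" where "E = [:-1, 1:] ^ order 1 (P x1)"
  have "E \<noteq> 0" by (simp add: E_def)
  have E_dvd: "E dvd P x" if "x \<in> A" for x
    using that x1_min by (cases "P x = 0") (auto simp: E_def A'_def order_divides)
  show ?thesis
  proof (rule that[of "Fract D 1 * Fract 1 E" "\<lambda>x. P x div E"])
    fix x assume "x \<in> A"
    have "Fract D 1 * Fract 1 E * f x = (f x * Fract D 1) * Fract 1 E"
      by (simp add: ac_simps)
    also have "\<dots> = Fract (E * (P x div E)) (E * 1)"
      using P[OF \<open>x \<in> A\<close>] E_dvd[OF \<open>x \<in> A\<close>] by simp
    also have "\<dots> = Fract (P x div E) 1"
      using \<open>E \<noteq> 0\<close> by (rule mult_fract_cancel)
    finally show "Fract D 1 * Fract 1 E * f x = Fract (P x div E) 1" .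
  next
    have "P x1 \<noteq> 0" "x1 \<in> A" using \<open>x1 \<in> A'\<close> by (simp_all add: A'_def)
    have "\<not> [:-1, 1:] dvd P x1 div E"
    proof
      assume "[:-1, 1:] dvd P x1 div E"
      then have "E * [:-1, 1:] dvd E * (P x1 div E)" by (rule mult_dvd_mono[OF dvd_refl])
      then have "[:-1, 1:] ^ Suc (order 1 (P x1)) dvd P x1"
        using E_dvd[OF \<open>x1 \<in> A\<close>] by (simp only: E_def power_Suc2 dvd_mult_div_cancel)
      then show False using order[OF \<open>P x1 \<noteq> 0\<close>, of 1] by simp
    qed
    then show "\<exists>x\<in>A. poly (P x div E) 1 \<noteq> 0"
      using \<open>x1 \<in> A'\<close> by (auto simp: A'_def poly_eq_0_iff_dvd)
  qed
qed

lemma specialisation_in_Iprime: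
  fixes f :: "(nat \<Rightarrow> int) \<Rightarrow> K"
  assumes f: "f \<in> Ikr N n k r" and R: "\<And>x. f x \<noteq> 0 \<Longrightarrow> c * f x = Fract (R x) 1"
  shows "(\<lambda>x. if f x \<noteq> 0 then poly (R x) 1 else 0) \<in> Iprime n k r"
proof -
  define A where "A = {x. f x \<noteq> 0}"
  define fb where "fb x = (if f x \<noteq> 0 then poly (R x) 1 else 0)" for x
  have "finite A" "A \<subseteq> Pn n" using f by (auto simp: A_def Ikr_def LV_def)
  have support: "{x. fb x \<noteq> 0} \<subseteq> A" by (auto simp: fb_def A_def)
  then have "fb \<in> LV n"
    using \<open>finite A\<close> \<open>A \<subseteq> Pn n\<close> finite_subset by (auto simp: LV_def)
  moreover have "lpeval n fb zb = 0" if zb: "zb \<in> Zprime n k r" for zb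
  proof -
    obtain z where "z \<in> Zkr n k r (tK N k r) (qK N k r)" and z: "\<forall>l<n. monomial_at_1 (z l) (zb l)"
      using Zprime_lifts_to_Zkr[OF zb] by blast
    have "(\<Sum>x\<in>A. Fract (R x) 1 * (\<Prod>i<n. z i powi x i)) = c * lpeval n f z"
      by (simp add: lpeval_def A_def sum_distrib_left R mult.assoc[symmetric])
    also have "\<dots> = 0" using f \<open>z \<in> Zkr n k r (tK N k r) (qK N k r)\<close> by (simp add: Ikr_def)
    finally have "(\<Sum>x\<in>A. Fract (R x) 1 * (\<Prod>i<n. z i powi x i)) = 0" .
    moreover have "value_at_1 (\<Sum>x\<in>A. Fract (R x) 1 * (\<Prod>i<n. z i powi x i))
        (\<Sum>x\<in>A. poly (R x) 1 * (\<Prod>i<n. zb i powi x i))"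
      using \<open>finite A\<close> z
      by (intro value_at_1_sum value_at_1_mult value_at_1_const monomial_at_1_value
          monomial_at_1_prod monomial_at_1_power_int) auto
    ultimately have "(\<Sum>x\<in>A. poly (R x) 1 * (\<Prod>i<n. zb i powi x i)) = 0"
      using value_at_1_zero by simp
    moreover have "lpeval n fb zb = (\<Sum>x\<in>A. fb x * (\<Prod>i<n. zb i powi x i))"
      by (rule lpeval_eq_sum[OF \<open>finite A\<close> support])
    ultimately show ?thesis by (simp add: fb_def A_def)
  qed
  ultimately show ?thesis by (simp add: Iprime_def fb_def[abs_def])
qed

lemma Ikr_eq_0_if_vanishes_on_B:
  fixes f :: "(nat \<Rightarrow> int) \<Rightarrow> K"
  assumes "2 \<le> r" "1 \<le> k" and f: "f \<in> Ikr N n k r" and vanishes: "\<forall>lam\<in>Bkr n k r. f lam = 0"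
  shows "f = 0"
proof (rule ccontr)
  assume "f \<noteq> 0"
  then obtain x0 where "f x0 \<noteq> 0" by (auto simp: fun_eq_iff)
  moreover have "finite {x. f x \<noteq> 0}" using f by (simp add: Ikr_def LV_def)
  ultimately obtain c R where R: "\<And>x. f x \<noteq> 0 \<Longrightarrow> c * f x = Fract (R x) 1"
    and "\<exists>x. f x \<noteq> 0 \<and> poly (R x) 1 \<noteq> 0"
    using ex_scaling_to_polys_not_all_vanishing_at_1[of "{x. f x \<noteq> 0}" x0 f] by auto
  then have "(\<lambda>x. if f x \<noteq> 0 then poly (R x) 1 else 0) \<noteq> 0" by (auto simp: fun_eq_iff)
  moreover have "(\<lambda>x. if f x \<noteq> 0 then poly (R x) 1 else 0) = 0"
    using Iprime_eq_0_if_vanishes_on_B[OF assms(1,2) specialisation_in_Iprime[OF f R]] vanishes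
    by simp
  ultimately show False by contradiction
qed

lemma vanishes_on_Bkr_if_vanishes_on_BkrM:
  assumes "f \<in> VM n M" "\<forall>lam\<in>BkrM n k r M. f lam = 0"
  shows "\<forall>lam\<in>Bkr n k r. f lam = 0"
  using assms by (auto simp: VM_def BkrM_def)

theorem corollary5p1:
  fixes n k r M N :: nat
  assumes "n \<ge> 2" and "1 \<le> k" and "k \<le> n - 1" and "r \<ge> 2" and "N \<ge> 1"
  shows "fdim (Iprime n k r \<inter> VM n M) \<le> card (BkrM n k r M)
       \<and> fdim (Ikr N n k r \<inter> VM n M) \<le> card (BkrM n k r M)"
proof
  \<comment> \<open>of the hypotheses only \<open>1 \<le> k\<close> and \<open>r \<ge> 2\<close> are needed\<close>
  have "finite (BkrM n k r M)" using finite_PM by (simp add: BkrM_def)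
  show "fdim (Iprime n k r \<inter> VM n M) \<le> card (BkrM n k r M)"
  proof (rule fdim_le_card_if_determined_on[OF _ \<open>finite (BkrM n k r M)\<close>])
    show "module.subspace (\<lambda>c f x. c * f x) (Iprime n k r \<inter> VM n M)"
      using subspace_vanishing_VM[of n "Zprime n k r"] by (simp add: Iprime_def)
    show "f = 0" if "f \<in> Iprime n k r \<inter> VM n M" "\<forall>lam\<in>BkrM n k r M. f lam = 0" for f
      using that Iprime_eq_0_if_vanishes_on_B[OF assms(4,2)] vanishes_on_Bkr_if_vanishes_on_BkrM
      by blast
  qed
  show "fdim (Ikr N n k r \<inter> VM n M) \<le> card (BkrM n k r M)"
  proof (rule fdim_le_card_if_determined_on[OF _ \<open>finite (BkrM n k r M)\<close>])
    show "module.subspace (\<lambda>c f x. c * f x) (Ikr N n k r \<inter> VM n M)"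
      using subspace_vanishing_VM[of n "Zkr n k r (tK N k r) (qK N k r)"] by (simp add: Ikr_def)
    show "f = 0" if "f \<in> Ikr N n k r \<inter> VM n M" "\<forall>lam\<in>BkrM n k r M. f lam = 0" for f
      using that Ikr_eq_0_if_vanishes_on_B[OF assms(4,2)] vanishes_on_Bkr_if_vanishes_on_BkrM
      by blast
  qed
qed

end
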